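(* Suppose $c_1\ge-1$, $c_2\ge-1$ and $c_3<\bar c_3(c_1,c_2)$. Then $(1-x^2)U'+2xU+\frac12U^2=P_c(x)$ has no solution in $C^1(-1,1)$.
   Context: $P_c(x):=c_1(1-x)+c_2(1+x)+c_3(1-x^2)$ for $c=(c_1,c_2,c_3)$. $\bar c_3(c_1,c_2):=-\frac12(\sqrt{1+c_1}+\sqrt{1+c_2})(\sqrt{1+c_1}+\sqrt{1+c_2}+2)$. *)

theory Defs
  imports "HOL-Analysis.Analysis"
begin

definition Pc :: "real \<Rightarrow> real \<Rightarrow> real \<Rightarrow> real \<Rightarrow> real" where
  "Pc c1 c2 c3 x = c1 * (1 - x) + c2 * (1 + x) + c3 * (1 - x^2)"

definition c3bar :: "real \<Rightarrow> real \<Rightarrow> real" where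
  "c3bar c1 c2 = - (1/2) * (sqrt (1 + c1) + sqrt (1 + c2)) * (sqrt (1 + c1) + sqrt (1 + c2) + 2)"

definition C1_on :: "real set \<Rightarrow> (real \<Rightarrow> real) \<Rightarrow> (real \<Rightarrow> real) \<Rightarrow> bool" where
  "C1_on S U U' \<longleftrightarrow> (\<forall>x\<in>S. (U has_real_derivative U' x) (at x)) \<and> continuous_on S U'"

end

theory Submission
  imports Defs
begin

text \<open>Put a = sqrt (1 + c1), b = sqrt (1 + c2) and \<delta> = c3bar c1 c2 - c3 > 0. For \<delta> = 0 the
  equation has the explicit solution a (1 - x) - b (1 + x) - 2 x. The deviation D of a solution from
  it, multiplied by the Jacobi weight m = (1 + x) powr a * (1 - x) powr b, satisfies
  (D m)' = - m (\<delta> + D^2 / (2 (1 - x^2))) < 0. Hence if D 0 \<le> 0, then E = D m is negative on (0, 1)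
  and obeys E' (1 - x) \<le> - K E^2, which forces E to blow up before x = 1. The case D 0 > 0
  reduces to this one through the symmetry U x \<mapsto> - U (- x), which exchanges c1 and c2.\<close>

definition jacobi_weight :: "real \<Rightarrow> real \<Rightarrow> real \<Rightarrow> real" where
  "jacobi_weight a b x = (1 + x) powr a * (1 - x) powr b"

lemma jacobi_weight_pos: "-1 < x \<Longrightarrow> x < 1 \<Longrightarrow> jacobi_weight a b x > 0"
  by (simp add: jacobi_weight_def)

lemma has_real_derivative_jacobi_weight:
  assumes "-1 < x" "x < 1"
  shows "(jacobi_weight a b has_real_derivative
           jacobi_weight a b x * (a / (1 + x) - b / (1 - x))) (at x)"
proof -
  have "(jacobi_weight a b has_real_derivative
          a * (1+x) powr (a-1) * (1-x) powr b + (1+x) powr a * (b * (1-x) powr (b-1) * (-1))) (at x)"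
    unfolding jacobi_weight_def[abs_def] using assms by (auto intro!: derivative_eq_intros)
  moreover have "a * (1+x) powr (a-1) * (1-x) powr b + (1+x) powr a * (b * (1-x) powr (b-1) * (-1))
      = jacobi_weight a b x * (a / (1 + x) - b / (1 - x))"
    using assms by (simp add: jacobi_weight_def powr_diff field_simps)
  ultimately show ?thesis by simp
qed

lemma jacobi_weight_mult_bound:
  assumes "a \<ge> 0" "b \<ge> 0" "0 \<le> x" "x < 1"
  shows "jacobi_weight a b x * (1 + x) \<le> 2 powr (a + 1)"
proof -
  have "(1 + x) powr a \<le> 2 powr a" using assms by (intro powr_mono2) auto
  moreover have "(1 - x) powr b \<le> 1" using assms powr_mono2[of b "1 - x" 1] by auto
  ultimately have "jacobi_weight a b x \<le> 2 powr a"
    unfolding jacobi_weight_def by (meson mult_right_le_one_le order_trans powr_ge_zero)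
  then have "jacobi_weight a b x * (1 + x) \<le> 2 powr a * 2"
    using assms by (intro mult_mono) auto
  then show ?thesis by (simp add: powr_add)
qed

text \<open>The function 1/E + K ln (1 - x) is nondecreasing while K ln (1 - x) tends to -\<infinity>,
  so 1/E would eventually become positive.\<close>
lemma no_negative_solution_of_blowup_inequality:
  fixes E E' :: "real \<Rightarrow> real" and K s :: real
  assumes K: "K > 0" and s: "s < 1"
    and deriv: "\<And>x. s \<le> x \<Longrightarrow> x < 1 \<Longrightarrow> (E has_real_derivative E' x) (at x)"
    and neg: "\<And>x. s \<le> x \<Longrightarrow> x < 1 \<Longrightarrow> E x < 0"
    and bound: "\<And>x. s \<le> x \<Longrightarrow> x < 1 \<Longrightarrow> E' x * (1 - x) \<le> - K * (E x)\<^sup>2"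
  shows False
proof -
  define G where "G x = 1 / E x + K * ln (1 - x)" for x
  have G_mono: "G s \<le> G x" if "s \<le> x" "x < 1" for x
  proof (rule DERIV_nonneg_imp_nondecreasing[OF that(1)])
    fix y assume y: "s \<le> y" "y \<le> x"
    with that have "y < 1" by simp
    have "(G has_real_derivative - E' y / (E y)\<^sup>2 - K / (1 - y)) (at y)"
      unfolding G_def[abs_def] using deriv[OF y(1) \<open>y < 1\<close>] neg[OF y(1) \<open>y < 1\<close>] \<open>y < 1\<close>
      by (auto intro!: derivative_eq_intros simp: power2_eq_square)
    moreover have "K / (1 - y) \<le> - E' y / (E y)\<^sup>2"
      using bound[OF y(1) \<open>y < 1\<close>] neg[OF y(1) \<open>y < 1\<close>] \<open>y < 1\<close>
      by (simp add: field_simps)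
    ultimately show "\<exists>d. (G has_real_derivative d) (at y) \<and> 0 \<le> d"
      by (intro exI conjI) auto
  qed
  define L where "L = min (G s / K) (ln (1 - s)) - 1"
  define x where "x = 1 - exp L"
  have "ln (1 - x) = L" "L < ln (1 - s)" by (simp_all add: x_def L_def)
  moreover have "exp L < 1 - s"
    using \<open>L < ln (1 - s)\<close> s by (metis exp_less_cancel_iff exp_ln diff_gt_0_iff_gt)
  ultimately have x: "s \<le> x" "x < 1" by (simp_all add: x_def)
  have "ln (1 - x) < G s / K" using \<open>ln (1 - x) = L\<close> by (simp add: L_def)
  then have "K * ln (1 - x) < G s" using K by (simp add: pos_less_divide_eq mult.commute)
  then have "1 / E x > 0" using G_mono[OF x] unfolding G_def by linarith
  with neg[OF x] show False by (simp add: divide_less_0_iff)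
qed

definition riccati_rhs :: "real \<Rightarrow> real \<Rightarrow> real \<Rightarrow> real \<Rightarrow> real" where
  "riccati_rhs a b \<delta> x =
     (a^2 - 1) * (1 - x) + (b^2 - 1) * (1 + x) - ((a + b) * (a + b + 2) / 2 + \<delta>) * (1 - x^2)"

lemma Pc_eq_riccati_rhs:
  assumes "c1 \<ge> -1" "c2 \<ge> -1"
  shows "Pc c1 c2 c3 x = riccati_rhs (sqrt (1 + c1)) (sqrt (1 + c2)) (c3bar c1 c2 - c3) x"
  using assms by (simp add: Pc_def riccati_rhs_def c3bar_def field_simps)

lemma riccati_rhs_reflect: "riccati_rhs a b \<delta> (- x) = riccati_rhs b a \<delta> x"
  by (simp add: riccati_rhs_def algebra_simps)

lemma riccati_deviation_identity:
  fixes a b \<delta> x u u' :: real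
  assumes x: "-1 < x" "x < 1"
    and ode: "(1 - x^2) * u' + 2 * x * u + (1/2) * u^2 = riccati_rhs a b \<delta> x"
  defines "d \<equiv> u + 2 * x - a * (1 - x) + b * (1 + x)"
  shows "u' + 2 + a + b + d * (a / (1 + x) - b / (1 - x)) = - (\<delta> + d^2 / (2 * (1 - x^2)))"
proof -
  have "1 - x^2 = (1 - x) * (1 + x)" by (simp add: algebra_simps power2_eq_square)
  then have nz: "1 + x \<noteq> 0" "1 - x \<noteq> 0" "1 - x^2 \<noteq> 0" using x by auto
  have "u' = (riccati_rhs a b \<delta> x - 2 * x * u - (1/2) * u^2) / (1 - x^2)"
    using ode nz by (simp add: field_simps)
  then show ?thesis
    using nz unfolding d_def riccati_rhs_def by (simp add: field_simps power2_eq_square) algebra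
qed

definition riccati_solution ::
    "real \<Rightarrow> real \<Rightarrow> real \<Rightarrow> (real \<Rightarrow> real) \<Rightarrow> (real \<Rightarrow> real) \<Rightarrow> bool" where
  "riccati_solution a b \<delta> U U' \<longleftrightarrow>
     (\<forall>x\<in>{-1<..<1}. (U has_real_derivative U' x) (at x) \<and>
        (1 - x^2) * U' x + 2 * x * U x + (1/2) * (U x)^2 = riccati_rhs a b \<delta> x)"

lemma riccati_solution_reflect:
  assumes "riccati_solution a b \<delta> U U'"
  shows "riccati_solution b a \<delta> (\<lambda>x. - U (- x)) (\<lambda>x. U' (- x))"
  unfolding riccati_solution_def
proof
  fix x :: real assume "x \<in> {-1<..<1}"
  then have "- x \<in> {-1<..<1}" by auto
  with assms have U: "(U has_real_derivative U' (- x)) (at (- x))"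
    and ode: "(1 - (- x)^2) * U' (- x) + 2 * (- x) * U (- x) + (1/2) * (U (- x))^2
                = riccati_rhs a b \<delta> (- x)"
    unfolding riccati_solution_def by blast+
  have "((\<lambda>x. - U (- x)) has_real_derivative U' (- x)) (at x)"
    using DERIV_minus[OF DERIV_mirror[THEN iffD1, OF U]] by simp
  moreover have "(1 - x^2) * U' (- x) + 2 * x * - U (- x) + (1/2) * (- U (- x))^2
                   = riccati_rhs b a \<delta> x"
    using ode by (simp add: riccati_rhs_reflect)
  ultimately show "((\<lambda>x. - U (- x)) has_real_derivative U' (- x)) (at x) \<and>
      (1 - x^2) * U' (- x) + 2 * x * - U (- x) + (1/2) * (- U (- x))^2 = riccati_rhs b a \<delta> x"
    ..
qed

lemma no_riccati_solution_below_explicit: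
  assumes a: "a \<ge> 0" and b: "b \<ge> 0" and \<delta>: "\<delta> > 0"
    and sol: "riccati_solution a b \<delta> U U'" and below: "U 0 \<le> a - b"
  shows False
proof -
  define D where "D x = U x + 2 * x - a * (1 - x) + b * (1 + x)" for x
  define m where "m = jacobi_weight a b"
  define E where "E x = D x * m x" for x
  define E' where "E' x = - m x * (\<delta> + (D x)^2 / (2 * (1 - x^2)))" for x
  have square_pos: "1 - x^2 > 0" if "-1 < x" "x < 1" for x :: real
    using that by (simp add: abs_square_less_1)
  have E_deriv: "(E has_real_derivative E' x) (at x)" if x: "-1 < x" "x < 1" for x
  proof -
    from sol x have U: "(U has_real_derivative U' x) (at x)"
      and ode: "(1 - x^2) * U' x + 2 * x * U x + (1/2) * (U x)^2 = riccati_rhs a b \<delta> x"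
      unfolding riccati_solution_def by auto
    have "(D has_real_derivative U' x + 2 + a + b) (at x)"
      unfolding D_def[abs_def] using U by (auto intro!: derivative_eq_intros)
    then have "(E has_real_derivative
        m x * (U' x + 2 + a + b + D x * (a / (1 + x) - b / (1 - x)))) (at x)"
      unfolding E_def[abs_def] m_def using has_real_derivative_jacobi_weight[OF x]
      by (auto intro!: derivative_eq_intros simp: algebra_simps)
    moreover have "U' x + 2 + a + b + D x * (a / (1 + x) - b / (1 - x))
        = - (\<delta> + (D x)^2 / (2 * (1 - x^2)))"
      unfolding D_def by (rule riccati_deviation_identity[OF x ode])
    ultimately show ?thesis unfolding E'_def by (simp only: mult_minus_left mult_minus_right)
  qed
  have E'_neg: "E' x < 0" if "-1 < x" "x < 1" for x
    using jacobi_weight_pos[OF that] square_pos[OF that] \<delta>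
    by (simp add: E'_def m_def add_pos_nonneg)
  have E_neg: "E x < 0" if "0 < x" "x < 1" for x
  proof -
    have "E x < E 0"
    proof (rule DERIV_neg_imp_decreasing[OF that(1)])
      fix y assume "0 \<le> y" "y \<le> x"
      with that have "-1 < y" "y < 1" by auto
      then show "\<exists>d. (E has_real_derivative d) (at y) \<and> d < 0"
        using E_deriv E'_neg by blast
    qed
    also have "E 0 \<le> 0" using below by (simp add: E_def D_def m_def jacobi_weight_def)
    finally show ?thesis .
  qed
  show False
  proof (rule no_negative_solution_of_blowup_inequality)
    show "1 / (2 * 2 powr (a + 1)) > 0" by simp
    fix x :: real assume x: "1/2 \<le> x" "x < 1"
    then show "(E has_real_derivative E' x) (at x)" "E x < 0" by (auto intro: E_deriv E_neg)
    have mx: "m x > 0" "m x * (1 + x) \<le> 2 powr (a + 1)"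
      using x jacobi_weight_pos jacobi_weight_mult_bound[OF a b] by (auto simp: m_def)
    have factor: "1 - x^2 = (1 - x) * (1 + x)" by (simp add: algebra_simps power2_eq_square)
    have "E' x * (1 - x) = - m x * (1 - x) * \<delta> - (m x * (D x)^2 / (2 * (1 + x)))"
      using x unfolding E'_def factor by (simp add: divide_simps) (simp add: algebra_simps)
    also have "\<dots> \<le> - (m x * (D x)^2 / (2 * (1 + x)))"
      using x mx \<delta> by simp
    also have "\<dots> \<le> - (m x * (1 + x) / 2 powr (a + 1) * (m x * (D x)^2 / (2 * (1 + x))))"
      using x mx by (intro le_imp_neg_le mult_left_le_one_le) auto
    also have "\<dots> = - (1 / (2 * 2 powr (a + 1))) * (E x)^2"
      using x by (simp add: E_def divide_simps) (simp add: algebra_simps power2_eq_square)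
    finally show "E' x * (1 - x) \<le> - (1 / (2 * 2 powr (a + 1))) * (E x)^2" .
  qed simp
qed

theorem lemma2p6:
  fixes c1 c2 c3 :: real
  assumes "c1 \<ge> -1" and "c2 \<ge> -1" and "c3 < c3bar c1 c2"
  shows "\<not> (\<exists>U U'. C1_on {-1<..<1} U U' \<and>
           (\<forall>x\<in>{-1<..<1}. (1 - x^2) * U' x + 2 * x * U x + (1/2) * (U x)^2 = Pc c1 c2 c3 x))"
proof
  assume "\<exists>U U'. C1_on {-1<..<1} U U' \<and>
           (\<forall>x\<in>{-1<..<1}. (1 - x^2) * U' x + 2 * x * U x + (1/2) * (U x)^2 = Pc c1 c2 c3 x)"
  then obtain U U' where "C1_on {-1<..<1} U U'"
    and ode: "\<forall>x\<in>{-1<..<1}. (1 - x^2) * U' x + 2 * x * U x + (1/2) * (U x)^2 = Pc c1 c2 c3 x"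
    by blast
  define a b where "a = sqrt (1 + c1)" and "b = sqrt (1 + c2)"
  have "a \<ge> 0" "b \<ge> 0" "c3bar c1 c2 - c3 > 0" using assms by (simp_all add: a_def b_def)
  moreover have sol: "riccati_solution a b (c3bar c1 c2 - c3) U U'"
    using \<open>C1_on {-1<..<1} U U'\<close> ode Pc_eq_riccati_rhs[OF assms(1,2)]
    by (simp add: riccati_solution_def C1_on_def a_def b_def)
  ultimately show False
  proof (cases "U 0 \<le> a - b")
    case False
    then have "- U (- 0) \<le> b - a" by simp
    with \<open>b \<ge> 0\<close> \<open>a \<ge> 0\<close> \<open>c3bar c1 c2 - c3 > 0\<close> riccati_solution_reflect[OF sol]
    show False by (rule no_riccati_solution_below_explicit)
  qed (rule no_riccati_solution_below_explicit)
qed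

end
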